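(* There exist constants $c>0$ and $r_*>0$, depending only on $m$ and $\{p_1,\dots,p_m\}$, such that for all $0<r<r_*$ and all real $y$ with $r^{2/3}<|y|\le\tfrac12$, the number of $h\in\mathcal S(r)$ with $\|hy\|\ge \frac{1}{3p_1}$ is at least $c(\log 1/r)^{m-1}$.
   Context: Fix an integer $m\ge 2$ and integers $1<p_1<\dots<p_m$ with $\gcd(p_i,p_j)=1$ for $i\neq j$; let $\mathcal S=\{p_1^{\alpha_1}\cdots p_m^{\alpha_m}:\alpha_i\in\mathbb Z_{\ge0}\}$ and $\mathcal S(r)=\{h\in\mathcal S: hr\le1\}$ for $r>0$. $\|x\|$ denotes the distance from the real number $x$ to the nearest integer. *)

theory Defs
  imports Complex_Main
begin

definition smooth_set :: "nat \<Rightarrow> (nat \<Rightarrow> nat) \<Rightarrow> nat set" where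
  "smooth_set m p = {\<Prod>i\<in>{1..m}. p i ^ a i | a :: nat \<Rightarrow> nat. True}"

definition smooth_set_r :: "nat \<Rightarrow> (nat \<Rightarrow> nat) \<Rightarrow> real \<Rightarrow> nat set" where
  "smooth_set_r m p r = {h \<in> smooth_set m p. real h * r \<le> 1}"

definition dist_int :: "real \<Rightarrow> real" where
  "dist_int x = min (x - of_int \<lfloor>x\<rfloor>) (of_int \<lceil>x\<rceil> - x)"

end

theory Submission
  imports Defs "HOL-Library.FuncSet"
begin

text \<open>
  Let A be a small multiple of log (1/r) and consider the monomials g in p 2, ..., p m with
  exponents at most A. If every such g has a multiple h = p 1^k g in S(r) with
  dist_int (h y) \<ge> 1/(3 p 1), these give (A + 1)^(m-1) elements. Otherwise, for some g all
  admissible p 1^k g y lie within 1/(3 p 1) of an integer; multiplying by p 1 then scales that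
  distance exactly, which forces dist_int (g y) < g r / 3. Cancelling factors of g yields d | g and
  a fraction N / p i with i \<ge> 2 and p i not dividing N such that |d y - N / p i| \<le> d r / 3; here
  r / 3 < |y| \<le> 1/2 excludes d = 1. For any G coprime to p i, G d y then stays at distance about
  1 / p i from the integers, and one of the next p m powers of p 1 pushes it beyond 1/(3 p 1).
  Letting G range over monomials in the p l with l \<notin> {1, i} and over A blocks of exponents of
  p 1 gives A^(m-1) elements.
\<close>

lemma dist_int_le_abs_diff: "dist_int z \<le> \<bar>z - of_int n\<bar>"
proof (cases "of_int n \<le> z")
  case True
  then have "n \<le> \<lfloor>z\<rfloor>" by (simp add: le_floor_iff)
  then show ?thesis unfolding dist_int_def using True by linarith
next
  case False
  then have "\<lceil>z\<rceil> \<le> n" by (simp add: ceiling_le_iff)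
  then show ?thesis unfolding dist_int_def using False by linarith
qed

lemma dist_int_attained: "\<exists>n. dist_int z = \<bar>z - of_int n\<bar>"
proof (cases "z - of_int \<lfloor>z\<rfloor> \<le> of_int \<lceil>z\<rceil> - z")
  case True
  then show ?thesis unfolding dist_int_def by (intro exI[of _ "\<lfloor>z\<rfloor>"]) simp
next
  case False
  then show ?thesis unfolding dist_int_def by (intro exI[of _ "\<lceil>z\<rceil>"]) simp
qed

lemma dist_int_eq_abs_diff:
  assumes "\<bar>z - of_int n\<bar> \<le> 1/2"
  shows "dist_int z = \<bar>z - of_int n\<bar>"
proof -
  obtain n' where n': "dist_int z = \<bar>z - of_int n'\<bar>"
    using dist_int_attained by blast
  have "\<bar>z - of_int n\<bar> \<le> \<bar>z - of_int n'\<bar>"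
  proof (cases "n' = n")
    case False
    then have "1 \<le> \<bar>n - n'\<bar>" by linarith
    then have "1 \<le> \<bar>of_int n - of_int n' :: real\<bar>"
      by (metis of_int_1_le_iff of_int_abs of_int_diff)
    then show ?thesis using assms by linarith
  qed simp
  then show ?thesis using n' dist_int_le_abs_diff[of z n] by linarith
qed

lemma dist_int_add_ge: "dist_int x - \<bar>e\<bar> \<le> dist_int (x + e)"
proof -
  obtain n where "dist_int (x + e) = \<bar>x + e - of_int n\<bar>"
    using dist_int_attained by blast
  then show ?thesis using dist_int_le_abs_diff[of x n] by linarith
qed

lemma dist_int_of_int_div_ge:
  fixes z P :: int
  assumes "P > 0" "\<not> P dvd z"
  shows "1 / of_int P \<le> dist_int (of_int z / of_int P)"
proof -
  obtain n where n: "dist_int (of_int z / of_int P) = \<bar>of_int z / of_int P - of_int n\<bar>"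
    using dist_int_attained by blast
  have "z - n * P \<noteq> 0" using assms(2) by (metis dvd_triv_right eq_iff_diff_eq_0)
  then have num: "1 \<le> \<bar>real_of_int (z - n * P)\<bar>" by linarith
  have "of_int z / of_int P - of_int n = real_of_int (z - n * P) / of_int P"
    using assms(1) by (simp add: field_simps)
  then have "dist_int (of_int z / of_int P) = \<bar>real_of_int (z - n * P)\<bar> / of_int P"
    using n assms(1) by (simp add: abs_divide)
  then show ?thesis using num assms(1) by (simp add: divide_right_mono)
qed

lemma dist_int_mult_nat:
  fixes q :: nat
  assumes "real q * dist_int x \<le> 1/2"
  shows "dist_int (real q * x) = real q * dist_int x"
proof -
  obtain n where n: "dist_int x = \<bar>x - of_int n\<bar>" using dist_int_attained by blast
  have "\<bar>real q * x - of_int (int q * n)\<bar> = real q * \<bar>x - of_int n\<bar>"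
    by (simp add: abs_mult flip: right_diff_distrib)
  then show ?thesis using assms n dist_int_eq_abs_diff[of "real q * x" "int q * n"] by simp
qed

lemma dist_int_power_mult:
  fixes q :: nat
  assumes "\<forall>i<j. real q * dist_int (real q ^ i * x) \<le> 1/2"
  shows "dist_int (real q ^ j * x) = real q ^ j * dist_int x"
  using assms
proof (induction j)
  case (Suc j)
  have "real q * dist_int (real q ^ j * x) \<le> 1/2" using Suc.prems by simp
  then have "dist_int (real q * (real q ^ j * x)) = real q * dist_int (real q ^ j * x)"
    by (rule dist_int_mult_nat)
  then show ?case using Suc by (simp add: mult.assoc)
qed simp

text \<open>Multiplying by q expands the distance to the nearest integer by the factor q as long as it
  stays below 1/(3q); since q^n grows faster than n, this cannot go on for n + 1 steps.\<close>
lemma dist_int_power_escapes: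
  fixes q n :: nat
  assumes "2 \<le> q" "1 \<le> n" "1 / (3 * real n) \<le> dist_int x"
  shows "\<exists>j\<le>n. 1 / (3 * real q) \<le> dist_int (real q ^ j * x)"
proof (rule ccontr)
  assume "\<not> ?thesis"
  then have small: "\<forall>j\<le>n. dist_int (real q ^ j * x) < 1 / (3 * real q)"
    by (meson not_le)
  have q0: "real q > 0" using assms(1) by simp
  have "\<forall>i<n. real q * dist_int (real q ^ i * x) \<le> 1/2"
  proof (intro allI impI)
    fix i assume "i < n"
    then have "real q * dist_int (real q ^ i * x) < real q * (1 / (3 * real q))"
      using small q0 by (intro mult_strict_left_mono) auto
    then show "real q * dist_int (real q ^ i * x) \<le> 1/2" using q0 by simp
  qed
  then have "dist_int (real q ^ n * x) = real q ^ n * dist_int x"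
    by (rule dist_int_power_mult)
  also have "\<dots> \<ge> real q ^ n * (1 / (3 * real n))"
    using assms(3) by (intro mult_left_mono) auto
  finally have "real q ^ n * (1 / (3 * real n)) < 1 / (3 * real q)"
    using small by (meson le_refl order.strict_trans1)
  moreover have "n < q ^ (n + 1)"
  proof -
    have "n < 2 ^ n" by (rule less_exp)
    also have "\<dots> \<le> q ^ n" using assms(1) by (rule power_mono) simp
    also have "\<dots> \<le> q ^ (n + 1)" using assms(1) by (intro power_increasing) auto
    finally show ?thesis .
  qed
  then have "real n \<le> real q ^ n * real q" by (metis of_nat_le_iff of_nat_power power_Suc2 Suc_eq_plus1 less_imp_le)
  then have "1 / (3 * real q) \<le> real q ^ n * (1 / (3 * real n))"
    using assms(2) q0 by (simp add: divide_simps)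
  ultimately show False by linarith
qed

lemma dist_int_lt_of_power_multiples_near:
  fixes q :: nat and g r x :: real
  assumes q: "2 \<le> q" and gr: "0 < g * r" "g * r \<le> 1"
    and near: "\<forall>k. real q ^ k * g * r \<le> 1 \<longrightarrow> dist_int (real q ^ k * x) < 1 / (3 * real q)"
  shows "dist_int x < g * r / 3"
proof -
  have q1: "1 < real q" using q by simp
  obtain n where "1 / (g * r) < real q ^ n" using real_arch_pow[OF q1] by blast
  then have "1 < real q ^ n * g * r" using gr by (simp add: field_simps)
  then obtain K where K: "\<not> 1 < real q ^ K * g * r" "1 < real q ^ Suc K * g * r"
    using exists_least_lemma[of "\<lambda>k. 1 < real q ^ k * g * r"] gr by auto
  have below: "real q ^ i * g * r \<le> 1" if "i \<le> K" for i
  proof -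
    have "real q ^ i \<le> real q ^ K" using that q1 by (intro power_increasing) auto
    then have "real q ^ i * (g * r) \<le> real q ^ K * (g * r)" using gr by (intro mult_right_mono) auto
    then show ?thesis using K(1) by (simp add: mult.assoc)
  qed
  have "\<forall>i<K. real q * dist_int (real q ^ i * x) \<le> 1/2"
  proof (intro allI impI)
    fix i assume "i < K"
    then have "dist_int (real q ^ i * x) < 1 / (3 * real q)" using near below by simp
    then show "real q * dist_int (real q ^ i * x) \<le> 1/2" using q1 by (simp add: field_simps)
  qed
  then have "dist_int (real q ^ K * x) = real q ^ K * dist_int x"
    by (rule dist_int_power_mult)
  then have "real q ^ K * dist_int x < 1 / (3 * real q)"
    using near below[of K] by auto
  then have "3 * (real q ^ Suc K * dist_int x) < 1" using q1 by (simp add: field_simps)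
  then have "3 * (real q ^ Suc K * dist_int x) < real q ^ Suc K * (g * r)"
    using K(2) by (simp add: mult.assoc)
  then show ?thesis using q1 by (simp add: field_simps)
qed

lemma exists_far_power_multiple:
  fixes q P n G D :: nat and N :: int and y \<delta> :: real
  assumes "2 \<le> q" "0 < P" "P \<le> n" "\<not> int P dvd N" "coprime P G"
    and approx: "\<bar>real D * y - of_int N / real P\<bar> \<le> \<delta> * real D"
    and small: "real G * real D * \<delta> \<le> 1 / (3 * real n)"
  shows "\<exists>j\<le>n. 1 / (3 * real q) \<le> dist_int (real q ^ j * (real G * real D * y))"
proof -
  have P0: "real P > 0" using assms(2) by simp
  have "\<not> int P dvd int G * N"
    using assms(4,5) by (simp add: coprime_dvd_mult_right_iff)
  then have far: "1 / real P \<le> dist_int (of_int (int G * N) / real P)"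
    using dist_int_of_int_div_ge[of "int P" "int G * N"] assms(2) by simp
  define E where "E = real G * (real D * y - of_int N / real P)"
  have "\<bar>E\<bar> \<le> real G * (\<delta> * real D)"
    unfolding E_def using approx by (simp add: abs_mult mult_left_mono)
  then have err: "\<bar>E\<bar> \<le> 1 / (3 * real n)"
    using small by (simp add: mult_ac)
  have "real G * real D * y = of_int (int G * N) / real P + E"
    unfolding E_def by (simp add: algebra_simps)
  then have "dist_int (of_int (int G * N) / real P) - \<bar>E\<bar> \<le> dist_int (real G * real D * y)"
    using dist_int_add_ge[of "of_int (int G * N) / real P" E] by simp
  then have "1 / real P - 1 / (3 * real n) \<le> dist_int (real G * real D * y)"
    using far err by linarith
  moreover have "1 / real n \<le> 1 / real P" using assms(3) P0 by (simp add: frac_le)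
  moreover have "1 / (3 * real n) \<le> 1 / real n - 1 / (3 * real n)"
    using assms(2,3) by (simp add: field_simps)
  ultimately have "1 / (3 * real n) \<le> dist_int (real G * real D * y)" by linarith
  then show ?thesis using dist_int_power_escapes assms(1-3) by simp
qed

lemma exists_nat_above_scaled_log:
  fixes b \<Lambda> :: real and W :: nat
  assumes "1 < b" "2 * ((W + 1) * ln b) < \<Lambda>"
  shows "\<exists>A::nat. \<Lambda> / (2 * ((W + 1) * ln b)) \<le> A \<and> b ^ (A * W) * b \<le> exp \<Lambda>"
proof -
  define M where "M = (W + 1) * ln b"
  have M: "0 < M" using assms(1) unfolding M_def by simp
  define A where "A = nat \<lfloor>\<Lambda> / M\<rfloor>"
  have two: "2 < \<Lambda> / M" using assms(2) M by (simp add: M_def field_simps)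
  then have A: "real A \<le> \<Lambda> / M" "\<Lambda> / M - 1 \<le> real A" unfolding A_def by linarith+
  have "\<Lambda> / (2 * M) \<le> real A" using A(2) two by (simp add: field_simps)
  moreover have "b ^ (A * W) * b \<le> exp \<Lambda>"
  proof -
    have "1 \<le> real A" using A(2) two by linarith
    then have "(real (A * W) + 1) * ln b \<le> real A * M"
      using assms(1) unfolding M_def by (simp add: algebra_simps)
    also have "\<dots> \<le> \<Lambda>" using A(1) M by (simp add: field_simps)
    finally have exponent: "(real (A * W) + 1) * ln b \<le> \<Lambda>" .
    have "b ^ (A * W) * b = exp (ln b) ^ (A * W + 1)" using assms(1) by simp
    also have "\<dots> = exp (real (A * W + 1) * ln b)" by (simp only: exp_of_nat_mult)
    also have "\<dots> \<le> exp \<Lambda>" using exponent by (simp add: add.commute)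
    finally show ?thesis .
  qed
  ultimately show ?thesis unfolding M_def by blast
qed

locale smooth_numbers =
  fixes m :: nat and p :: "nat \<Rightarrow> nat"
  assumes two_le_m: "2 \<le> m" and one_lt_p1: "1 < p 1"
    and p_strict_mono: "\<forall>i j. 1 \<le> i \<longrightarrow> i < j \<longrightarrow> j \<le> m \<longrightarrow> p i < p j"
    and p_coprime: "\<forall>i\<in>{1..m}. \<forall>j\<in>{1..m}. i \<noteq> j \<longrightarrow> coprime (p i) (p j)"
begin

definition smooth_of :: "(nat \<Rightarrow> nat) \<Rightarrow> nat" where
  "smooth_of a = (\<Prod>i\<in>{1..m}. p i ^ a i)"

definition good_set :: "real \<Rightarrow> real \<Rightarrow> nat set" where
  "good_set r y = {h \<in> smooth_set_r m p r. dist_int (real h * y) \<ge> 1 / (3 * real (p 1))}"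

lemma one_lt_p: "i \<in> {1..m} \<Longrightarrow> 1 < p i"
  using one_lt_p1 p_strict_mono by (cases "i = 1") (auto intro: less_trans)

lemma p_le_p_m: "i \<in> {1..m} \<Longrightarrow> p i \<le> p m"
  using p_strict_mono by (cases "i = m") (auto intro: less_imp_le)

lemma smooth_of_in_smooth_set: "smooth_of a \<in> smooth_set m p"
  unfolding smooth_set_def smooth_of_def by blast

lemma smooth_of_pos: "0 < smooth_of a"
  unfolding smooth_of_def using one_lt_p by (intro prod_pos) fastforce

lemma smooth_of_add: "smooth_of (\<lambda>j. a j + b j) = smooth_of a * smooth_of b"
  unfolding smooth_of_def by (simp add: power_add prod.distrib)

lemma smooth_of_upd_add:
  assumes "i \<in> {1..m}"
  shows "smooth_of (a(i := a i + k)) = p i ^ k * smooth_of a"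
proof -
  have rest: "(\<Prod>j\<in>{1..m} - {i}. p j ^ (a(i := a i + k)) j) = (\<Prod>j\<in>{1..m} - {i}. p j ^ a j)"
    by (intro prod.cong) auto
  show ?thesis
    unfolding smooth_of_def prod.remove[OF finite_atLeastAtMost assms] rest
    by (simp add: power_add)
qed

lemma coprime_p_smooth_of:
  assumes "i \<in> {1..m}" "a i = 0"
  shows "coprime (p i) (smooth_of a)"
proof -
  have "smooth_of a = (\<Prod>j\<in>{1..m} - {i}. p j ^ a j)"
    unfolding smooth_of_def prod.remove[OF finite_atLeastAtMost assms(1)] using assms(2) by simp
  then show ?thesis
    using assms(1) p_coprime by (auto intro!: prod_coprime_right coprime_power_right_iff[THEN iffD2])
qed

lemma exponent_le_of_smooth_of_dvd:
  assumes "smooth_of a dvd smooth_of b" "i \<in> {1..m}"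
  shows "a i \<le> b i"
proof -
  have split: "smooth_of c = p i ^ c i * smooth_of (c(i := 0))" for c
    using smooth_of_upd_add[OF assms(2), of "c(i := 0)" "c i"] by simp
  have "p i ^ a i dvd p i ^ b i * smooth_of (b(i := 0))"
    using assms(1) split[of a] split[of b] by (metis dvd_mult_left)
  moreover have "coprime (p i ^ a i) (smooth_of (b(i := 0)))"
    using coprime_p_smooth_of[OF assms(2)] by simp
  ultimately have "p i ^ a i dvd p i ^ b i"
    using coprime_dvd_mult_left_iff by blast
  then show ?thesis
    using power_dvd_imp_le one_lt_p[OF assms(2)] by blast
qed

lemma smooth_of_eq_imp_exponent_eq:
  "smooth_of a = smooth_of b \<Longrightarrow> i \<in> {1..m} \<Longrightarrow> a i = b i"
  using exponent_le_of_smooth_of_dvd[of a b i] exponent_le_of_smooth_of_dvd[of b a i] by simp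

lemma smooth_of_le_power:
  assumes "\<forall>j\<in>{1..m}. a j \<le> A"
  shows "smooth_of a \<le> p m ^ (A * m)"
proof -
  have "smooth_of a \<le> (\<Prod>j\<in>{1..m}. p m ^ A)"
    unfolding smooth_of_def
  proof (intro prod_mono conjI)
    fix j assume j: "j \<in> {1..m}"
    have "p j ^ a j \<le> p j ^ A" using assms j one_lt_p[OF j] by (intro power_increasing) auto
    also have "\<dots> \<le> p m ^ A" using p_le_p_m[OF j] by (rule power_mono) simp
    finally show "p j ^ a j \<le> p m ^ A" .
  qed simp
  then show ?thesis by (simp add: power_mult)
qed

text \<open>If a smooth g without the factor p 1 satisfies gy \<approx> n, divide g by the p i
  dividing n until either g = 1 (impossible for \<epsilon> < |y| \<le> 1/2) or some p i does not divide
  the current numerator; this yields an approximation of dy by a fraction N / p i in lowest terms.\<close>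
lemma approximation_descent:
  fixes y \<epsilon> :: real
  assumes y: "\<epsilon> < \<bar>y\<bar>" "\<bar>y\<bar> \<le> 1/2"
    and "c 1 = 0" "\<bar>real (smooth_of c) * y - of_int n\<bar> \<le> \<epsilon> * smooth_of c"
  shows "\<exists>d i N. smooth_of d \<le> smooth_of c \<and> i \<in> {2..m} \<and> \<not> int (p i) dvd N \<and>
           \<bar>real (smooth_of d) * y - of_int N / real (p i)\<bar> \<le> \<epsilon> * smooth_of d"
  using assms(3,4)
proof (induction "smooth_of c" arbitrary: c n rule: less_induct)
  case less
  show ?case
  proof (cases "\<exists>i\<in>{1..m}. 0 < c i")
    case False
    then have "smooth_of c = 1" unfolding smooth_of_def by simp
    then have "\<bar>y - of_int n\<bar> \<le> \<epsilon>" using less.prems(2) by simp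
    moreover have "\<bar>y\<bar> \<le> \<bar>y - of_int n\<bar>"
      using dist_int_eq_abs_diff[of y 0] dist_int_le_abs_diff[of y n] y(2) by simp
    ultimately show ?thesis using y(1) by linarith
  next
    case True
    then obtain i where i: "i \<in> {1..m}" "0 < c i" by blast
    then have i2: "i \<in> {2..m}" using less.prems(1) by (cases "i = 1") auto
    define c' where "c' = c(i := c i - 1)"
    have c'1: "c' 1 = 0" unfolding c'_def using i2 less.prems(1) by auto
    have "c'(i := c' i + 1) = c" unfolding c'_def using i(2) by auto
    then have c: "smooth_of c = p i * smooth_of c'"
      using smooth_of_upd_add[OF i(1), of c' 1] by simp
    have pi: "1 < real (p i)" using one_lt_p[OF i(1)] by simp
    have le: "smooth_of c' \<le> smooth_of c" using c one_lt_p[OF i(1)] by simp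
    show ?thesis
    proof (cases "int (p i) dvd n")
      case True
      then obtain n' where n': "n = int (p i) * n'" by blast
      have "real (smooth_of c) * y - of_int n = real (p i) * (real (smooth_of c') * y - of_int n')"
        by (simp add: c n' algebra_simps)
      then have "\<bar>real (smooth_of c) * y - of_int n\<bar> = real (p i) * \<bar>real (smooth_of c') * y - of_int n'\<bar>"
        by (simp add: abs_mult)
      then have "\<bar>real (smooth_of c') * y - of_int n'\<bar> \<le> \<epsilon> * smooth_of c'"
        using less.prems(2) pi by (simp add: c)
      moreover have "smooth_of c' < smooth_of c" using c one_lt_p[OF i(1)] smooth_of_pos by simp
      ultimately show ?thesis using less.hyps c'1 le by (meson order_trans)
    next
      case False
      have "\<bar>real (smooth_of c') * y - of_int n / real (p i)\<bar>
            = \<bar>real (smooth_of c) * y - of_int n\<bar> / real (p i)"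
        using pi by (simp add: c field_simps)
      also have "\<dots> \<le> \<epsilon> * smooth_of c'"
        using less.prems(2) pi by (simp add: c divide_le_eq mult_ac)
      finally show ?thesis using False i2 le by blast
    qed
  qed
qed

lemma finite_good_set: "0 < r \<Longrightarrow> finite (good_set r y)"
proof -
  assume r: "0 < r"
  have "good_set r y \<subseteq> {..nat \<lceil>1/r\<rceil>}"
  proof
    fix h assume "h \<in> good_set r y"
    then have "real h \<le> 1 / r"
      using r unfolding good_set_def smooth_set_r_def by (simp add: field_simps)
    then show "h \<in> {..nat \<lceil>1/r\<rceil>}" by (simp add: le_nat_iff) linarith
  qed
  then show ?thesis by (rule finite_subset) simp
qed

lemma smooth_of_in_good_set_iff:
  "smooth_of a \<in> good_set r y \<longleftrightarrow>
     real (smooth_of a) * r \<le> 1 \<and> 1 / (3 * real (p 1)) \<le> dist_int (real (smooth_of a) * y)"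
  unfolding good_set_def smooth_set_r_def using smooth_of_in_smooth_set by simp

lemma card_le_card_good_set:
  assumes "0 < r" "\<forall>x\<in>X. smooth_of (F x) \<in> good_set r y"
    and "\<forall>x\<in>X. \<forall>x'\<in>X. (\<forall>j\<in>{1..m}. F x j = F x' j) \<longrightarrow> x = x'"
  shows "card X \<le> card (good_set r y)"
proof -
  have "inj_on (smooth_of \<circ> F) X"
    using assms(3) smooth_of_eq_imp_exponent_eq by (auto intro!: inj_onI)
  moreover have "(smooth_of \<circ> F) ` X \<subseteq> good_set r y" using assms(2) by auto
  ultimately show ?thesis using card_inj_on_le finite_good_set[OF assms(1)] by blast
qed

definition exponent_vec :: "nat set \<Rightarrow> (nat \<Rightarrow> nat) \<Rightarrow> nat \<Rightarrow> nat \<Rightarrow> nat" where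
  "exponent_vec J a k l = (if l = 1 then k else if l \<in> J then a l else 0)"

lemma exponent_vec_shift:
  "(exponent_vec J a k)(1 := exponent_vec J a k 1 + j) = exponent_vec J a (k + j)"
  by (auto simp: exponent_vec_def)

lemma smooth_of_exponent_vec_le:
  assumes "a \<in> PiE J (\<lambda>_. {0..A})"
  shows "smooth_of (exponent_vec J a k) \<le> p m ^ (k + A * m)"
proof -
  have "smooth_of (exponent_vec J a k) = p 1 ^ k * smooth_of (exponent_vec J a 0)"
    using smooth_of_upd_add[of 1 "exponent_vec J a 0" k] exponent_vec_shift[of J a 0 k] two_le_m
    by simp
  also have "\<dots> \<le> p m ^ k * p m ^ (A * m)"
  proof (rule mult_mono)
    show "p 1 ^ k \<le> p m ^ k" using p_le_p_m[of 1] two_le_m by (intro power_mono) auto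
    show "smooth_of (exponent_vec J a 0) \<le> p m ^ (A * m)"
      using assms by (intro smooth_of_le_power) (auto simp: exponent_vec_def PiE_iff)
  qed simp_all
  finally show ?thesis by (simp add: power_add)
qed

lemma card_good_set_ge_of_good_shifts:
  assumes "0 < r"
    and "\<forall>a\<in>PiE {2..m} (\<lambda>_. {0..A}). \<exists>k. smooth_of (exponent_vec {2..m} a k) \<in> good_set r y"
  shows "(A + 1) ^ (m - 1) \<le> card (good_set r y)"
proof -
  define X where "X = PiE {2..m} (\<lambda>_. {0..A})"
  obtain k where k: "\<forall>a\<in>X. smooth_of (exponent_vec {2..m} a (k a)) \<in> good_set r y"
    using bchoice[OF assms(2)[folded X_def]] by blast
  have "card X \<le> card (good_set r y)"
  proof (rule card_le_card_good_set[OF assms(1) k], intro ballI impI)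
    fix a a' assume a: "a \<in> X" "a' \<in> X"
      and eq: "\<forall>l\<in>{1..m}. exponent_vec {2..m} a (k a) l = exponent_vec {2..m} a' (k a') l"
    show "a = a'"
    proof (rule PiE_ext[OF a[unfolded X_def]])
      fix l assume "l \<in> {2..m}"
      then show "a l = a' l" using eq[rule_format, of l] by (auto simp: exponent_vec_def)
    qed
  qed
  moreover have "card X = (A + 1) ^ (m - 1)" unfolding X_def by (simp add: card_PiE)
  ultimately show ?thesis by simp
qed

lemma exists_good_power_shift:
  assumes "0 < r" "i \<in> {2..m}" "\<not> int (p i) dvd N"
    and approx: "\<bar>real (smooth_of d) * y - of_int N / real (p i)\<bar> \<le> r / 3 * smooth_of d"
    and "w i = 0"
    and size: "\<forall>j\<le>p m. real (smooth_of d * smooth_of (w(1 := w 1 + j))) * r \<le> 1 / real (p m)"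
  shows "\<exists>j\<le>p m. smooth_of (\<lambda>l. d l + (w(1 := w 1 + j)) l) \<in> good_set r y"
proof -
  have i: "i \<in> {1..m}" using assms(2) by auto
  have shift: "smooth_of (w(1 := w 1 + j)) = p 1 ^ j * smooth_of w" for j
    using smooth_of_upd_add[of 1] two_le_m by simp
  have "\<exists>j\<le>p m. 1 / (3 * real (p 1))
          \<le> dist_int (real (p 1) ^ j * (real (smooth_of w) * real (smooth_of d) * y))"
  proof (rule exists_far_power_multiple[OF _ _ _ assms(3) _ approx])
    show "2 \<le> p 1" using one_lt_p1 by simp
    show "0 < p i" "p i \<le> p m" using one_lt_p[OF i] p_le_p_m[OF i] by auto
    show "coprime (p i) (smooth_of w)" using coprime_p_smooth_of[of i w, OF i assms(5)] .
    show "real (smooth_of w) * real (smooth_of d) * (r / 3) \<le> 1 / (3 * real (p m))"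
      using size[rule_format, of 0] by (simp add: mult_ac)
  qed
  then obtain j where j: "j \<le> p m"
    "1 / (3 * real (p 1)) \<le> dist_int (real (p 1) ^ j * (real (smooth_of w) * real (smooth_of d) * y))"
    by blast
  have h: "smooth_of (\<lambda>l. d l + (w(1 := w 1 + j)) l) = smooth_of d * (p 1 ^ j * smooth_of w)"
    by (simp only: smooth_of_add shift)
  have "real (smooth_of d * (p 1 ^ j * smooth_of w)) * r \<le> 1 / real (p m)"
    using size[rule_format, OF j(1)] unfolding shift by simp
  also have "\<dots> \<le> 1" using one_lt_p[of m] two_le_m by simp
  finally have "smooth_of (\<lambda>l. d l + (w(1 := w 1 + j)) l) \<in> good_set r y"
    using j(2) unfolding smooth_of_in_good_set_iff unfolding h by (simp add: mult_ac)
  then show ?thesis using j(1) by blast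
qed

lemma card_good_set_ge_of_blocks:
  assumes "0 < r" "i \<in> {2..m}"
    and blocks: "\<forall>a\<in>PiE ({2..m} - {i}) (\<lambda>_. {0..A}). \<forall>t<A. \<exists>j<L.
      smooth_of (\<lambda>l. d l + exponent_vec ({2..m} - {i}) a (t * L + j) l) \<in> good_set r y"
  shows "A ^ (m - 1) \<le> card (good_set r y)"
proof -
  define J where "J = {2..m} - {i}"
  define X where "X = PiE J (\<lambda>_. {0..A}) \<times> {..<A}"
  define e where "e x j = (\<lambda>l. d l + exponent_vec J (fst x) (snd x * L + j) l)" for x j
  have "\<forall>x\<in>X. \<exists>j. j < L \<and> smooth_of (e x j) \<in> good_set r y"
    using blocks unfolding X_def J_def e_def by (auto simp: mem_Times_iff)
  from bchoice[OF this] obtain sel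
    where sel: "\<forall>x\<in>X. sel x < L \<and> smooth_of (e x (sel x)) \<in> good_set r y"
    by blast
  have "card X \<le> card (good_set r y)"
  proof (rule card_le_card_good_set[OF assms(1)])
    show "\<forall>x\<in>X. smooth_of (e x (sel x)) \<in> good_set r y" using sel by blast
    show "\<forall>x\<in>X. \<forall>x'\<in>X. (\<forall>l\<in>{1..m}. e x (sel x) l = e x' (sel x') l) \<longrightarrow> x = x'"
    proof (intro ballI impI)
      fix x x' assume x: "x \<in> X" "x' \<in> X" and eq: "\<forall>l\<in>{1..m}. e x (sel x) l = e x' (sel x') l"
      have "snd x * L + sel x = snd x' * L + sel x'"
        using eq[rule_format, of 1] two_le_m unfolding e_def exponent_vec_def by simp
      moreover have "(t * L + s) div L = t" if "s < L" for t s using that by simp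
      ultimately have "snd x = snd x'" using sel x by metis
      moreover have "fst x = fst x'"
      proof (rule PiE_ext)
        show "fst x \<in> PiE J (\<lambda>_. {0..A})" "fst x' \<in> PiE J (\<lambda>_. {0..A})"
          using x unfolding X_def by auto
        fix l assume "l \<in> J"
        then show "fst x l = fst x' l"
          using eq[rule_format, of l] unfolding e_def exponent_vec_def J_def by auto
      qed
      ultimately show "x = x'" by (simp add: prod_eq_iff)
    qed
  qed
  moreover have "card X = (A + 1) ^ (m - 2) * A"
    using assms(2) unfolding X_def J_def by (simp add: card_PiE card_cartesian_product numeral_2_eq_2)
  moreover have "A ^ (m - 1) \<le> (A + 1) ^ (m - 2) * A"
  proof -
    have "m - 1 = Suc (m - 2)" using two_le_m by simp
    then have "A ^ (m - 1) = A ^ (m - 2) * A" by (simp add: power_Suc2)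
    then show ?thesis by (simp add: power_mono)
  qed
  ultimately show ?thesis by linarith
qed

lemma card_good_set_ge_of_approximation:
  assumes "0 < r" "i \<in> {2..m}" "\<not> int (p i) dvd N"
    and approx: "\<bar>real (smooth_of d) * y - of_int N / real (p i)\<bar> \<le> r / 3 * smooth_of d"
    and d_le: "smooth_of d \<le> p m ^ (A * m)"
    and bound: "real (p m) ^ (A * (2 * m + p m + 1)) * r \<le> 1 / real (p m)"
  shows "A ^ (m - 1) \<le> card (good_set r y)"
proof (rule card_good_set_ge_of_blocks[OF assms(1,2)], intro ballI allI impI)
  define J where "J = {2..m} - {i}"
  fix a t assume a: "a \<in> PiE J (\<lambda>_. {0..A})" and t: "t < A"
  have "real (smooth_of d * smooth_of (exponent_vec J a (t * (p m + 1) + j))) * r \<le> 1 / real (p m)"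
    if "j \<le> p m" for j
  proof -
    have "t * (p m + 1) + j < (t + 1) * (p m + 1)" using that by simp
    also have "\<dots> \<le> A * (p m + 1)" using t by (intro mult_right_mono) auto
    finally have "A * m + (t * (p m + 1) + j + A * m) \<le> A * (2 * m + p m + 1)"
      by (simp add: algebra_simps)
    then have "p m ^ (A * m) * p m ^ (t * (p m + 1) + j + A * m) \<le> p m ^ (A * (2 * m + p m + 1))"
      unfolding power_add[symmetric] using one_lt_p[of m] two_le_m by (intro power_increasing) auto
    then have "smooth_of d * smooth_of (exponent_vec J a (t * (p m + 1) + j)) \<le> p m ^ (A * (2 * m + p m + 1))"
      using mult_le_mono[OF d_le smooth_of_exponent_vec_le[OF a]] by (meson le_trans)
    then have "real (smooth_of d * smooth_of (exponent_vec J a (t * (p m + 1) + j)))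
               \<le> real (p m) ^ (A * (2 * m + p m + 1))"
      by (metis of_nat_le_iff of_nat_power)
    then show ?thesis using bound assms(1) by (meson mult_right_mono less_imp_le order_trans)
  qed
  moreover have "exponent_vec J a (t * (p m + 1)) i = 0"
    unfolding exponent_vec_def J_def using assms(2) by auto
  ultimately have "\<exists>j\<le>p m. smooth_of (\<lambda>l. d l + exponent_vec J a (t * (p m + 1) + j) l) \<in> good_set r y"
    using exists_good_power_shift[OF assms(1-4), of "exponent_vec J a (t * (p m + 1))"]
    unfolding exponent_vec_shift by blast
  then show "\<exists>j<p m + 1. smooth_of (\<lambda>l. d l + exponent_vec ({2..m} - {i}) a (t * (p m + 1) + j) l)
               \<in> good_set r y"
    unfolding J_def by (auto simp: less_Suc_eq_le)
qed

lemma approximation_of_no_good_shift: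
  assumes "0 < r" "real (smooth_of b) * r \<le> 1"
    and no_good: "\<forall>k. smooth_of (b(1 := b 1 + k)) \<notin> good_set r y"
  shows "dist_int (real (smooth_of b) * y) < real (smooth_of b) * r / 3"
proof (rule dist_int_lt_of_power_multiples_near)
  show "2 \<le> p 1" using one_lt_p1 by simp
  show "0 < real (smooth_of b) * r" using smooth_of_pos assms(1) by simp
  show "real (smooth_of b) * r \<le> 1" by fact
  have shift: "smooth_of (b(1 := b 1 + k)) = p 1 ^ k * smooth_of b" for k
    using smooth_of_upd_add[of 1 b k] two_le_m by simp
  show "\<forall>k. real (p 1) ^ k * real (smooth_of b) * r \<le> 1 \<longrightarrow>
          dist_int (real (p 1) ^ k * (real (smooth_of b) * y)) < 1 / (3 * real (p 1))"
  proof (intro allI impI)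
    fix k assume "real (p 1) ^ k * real (smooth_of b) * r \<le> 1"
    moreover have "\<not> (real (smooth_of (b(1 := b 1 + k))) * r \<le> 1 \<and>
        1 / (3 * real (p 1)) \<le> dist_int (real (smooth_of (b(1 := b 1 + k))) * y))"
      using no_good unfolding smooth_of_in_good_set_iff by blast
    ultimately show "dist_int (real (p 1) ^ k * (real (smooth_of b) * y)) < 1 / (3 * real (p 1))"
      unfolding shift by (simp add: mult_ac not_le)
  qed
qed

lemma approximation_of_bad_monomial:
  assumes "0 < r" "r / 3 < \<bar>y\<bar>" "\<bar>y\<bar> \<le> 1/2" "a \<in> PiE {2..m} (\<lambda>_. {0..A})"
    and no_good: "\<forall>k. smooth_of (exponent_vec {2..m} a k) \<notin> good_set r y"
    and bound: "real (p m) ^ (A * (2 * m + p m + 1)) * r \<le> 1 / real (p m)"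
  shows "\<exists>d i N. smooth_of d \<le> p m ^ (A * m) \<and> i \<in> {2..m} \<and> \<not> int (p i) dvd N \<and>
           \<bar>real (smooth_of d) * y - of_int N / real (p i)\<bar> \<le> r / 3 * smooth_of d"
proof -
  define b where "b = exponent_vec {2..m} a 0"
  have b1: "b 1 = 0" unfolding b_def exponent_vec_def by simp
  have b_le: "smooth_of b \<le> p m ^ (A * m)"
    using smooth_of_exponent_vec_le[OF assms(4), of 0] unfolding b_def by simp
  have "p m ^ (A * m) \<le> p m ^ (A * (2 * m + p m + 1))"
    using one_lt_p[of m] two_le_m by (intro power_increasing mult_le_mono2) auto
  then have "real (smooth_of b) \<le> real (p m) ^ (A * (2 * m + p m + 1))"
    using b_le by (metis of_nat_le_iff of_nat_power order_trans)
  then have "real (smooth_of b) * r \<le> 1 / real (p m)"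
    using bound assms(1) by (meson mult_right_mono less_imp_le order_trans)
  also have "\<dots> \<le> 1" using one_lt_p[of m] two_le_m by simp
  finally have small: "real (smooth_of b) * r \<le> 1" .
  have "\<forall>k. smooth_of (b(1 := b 1 + k)) \<notin> good_set r y"
    using no_good unfolding b_def exponent_vec_shift by simp
  then have "dist_int (real (smooth_of b) * y) < real (smooth_of b) * r / 3"
    by (rule approximation_of_no_good_shift[OF assms(1) small])
  moreover obtain n where "dist_int (real (smooth_of b) * y) = \<bar>real (smooth_of b) * y - of_int n\<bar>"
    using dist_int_attained by blast
  ultimately have "\<bar>real (smooth_of b) * y - of_int n\<bar> \<le> r / 3 * smooth_of b" by (simp add: mult_ac)
  then show ?thesis
    using approximation_descent[of "r / 3" y b, OF assms(2,3) b1] b_le by (meson le_trans)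
qed

lemma card_good_set_ge:
  assumes "0 < r" "r / 3 < \<bar>y\<bar>" "\<bar>y\<bar> \<le> 1/2"
    and bound: "real (p m) ^ (A * (2 * m + p m + 1)) * r \<le> 1 / real (p m)"
  shows "A ^ (m - 1) \<le> card (good_set r y)"
proof (cases "\<forall>a\<in>PiE {2..m} (\<lambda>_. {0..A}). \<exists>k. smooth_of (exponent_vec {2..m} a k) \<in> good_set r y")
  case True
  then have "(A + 1) ^ (m - 1) \<le> card (good_set r y)"
    by (rule card_good_set_ge_of_good_shifts[OF assms(1)])
  moreover have "A ^ (m - 1) \<le> (A + 1) ^ (m - 1)" by (simp add: power_mono)
  ultimately show ?thesis by linarith
next
  case False
  then obtain a where "a \<in> PiE {2..m} (\<lambda>_. {0..A})"
    and "\<forall>k. smooth_of (exponent_vec {2..m} a k) \<notin> good_set r y" by blast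
  then obtain d i N where "smooth_of d \<le> p m ^ (A * m)" "i \<in> {2..m}" "\<not> int (p i) dvd N"
    "\<bar>real (smooth_of d) * y - of_int N / real (p i)\<bar> \<le> r / 3 * smooth_of d"
    using approximation_of_bad_monomial[OF assms(1-3) _ _ bound] by blast
  then show ?thesis using card_good_set_ge_of_approximation[OF assms(1) _ _ _ _ bound] by blast
qed

end

theorem mainTheorem10:
  fixes m :: nat and p :: "nat \<Rightarrow> nat"
  assumes "m \<ge> 2"
    and "1 < p 1"
    and "\<forall>i j. 1 \<le> i \<longrightarrow> i < j \<longrightarrow> j \<le> m \<longrightarrow> p i < p j"
    and "\<forall>i\<in>{1..m}. \<forall>j\<in>{1..m}. i \<noteq> j \<longrightarrow> coprime (p i) (p j)"
  shows "\<exists>c>0. \<exists>r\<^sub>s>0. \<forall>(r::real) (y::real).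
           0 < r \<and> r < r\<^sub>s \<and> r powr (2/3) < \<bar>y\<bar> \<and> \<bar>y\<bar> \<le> 1/2 \<longrightarrow>
           real (card {h \<in> smooth_set_r m p r. dist_int (real h * y) \<ge> 1 / (3 * real (p 1))})
             \<ge> c * (ln (1/r)) ^ (m - 1)"
proof -
  interpret smooth_numbers m p using assms by unfold_locales
  define W where "W = 2 * m + p m + 1"
  define M where "M = 2 * ((W + 1) * ln (real (p m)))"
  have pm: "1 < real (p m)" using one_lt_p[of m] assms(1) by simp
  have M: "0 < M" unfolding M_def using pm by simp
  have "(1 / M) ^ (m - 1) * ln (1 / r) ^ (m - 1) \<le> real (card (good_set r y))"
    if r: "0 < r" "r < exp (- M)" and y: "r powr (2/3) < \<bar>y\<bar>" "\<bar>y\<bar> \<le> 1/2" for r y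
  proof -
    have "M < ln (1 / r)" using r ln_less_cancel_iff[of r "exp (- M)"] by (simp add: ln_div)
    then obtain A :: nat where A: "ln (1 / r) / M \<le> A" "real (p m) ^ (A * W) * real (p m) \<le> 1 / r"
      using exists_nat_above_scaled_log[OF pm, of W "ln (1 / r)"] r(1) unfolding M_def by auto
    have "r < 1" using r(2) M by (meson exp_less_one_iff neg_less_0_iff_less order.strict_trans)
    then have "r powr 1 \<le> r powr (2/3)" using r(1) by (intro powr_mono') auto
    then have "A ^ (m - 1) \<le> card (good_set r y)"
      using card_good_set_ge[OF r(1) _ y(2)] A(2) r(1) y(1) pm unfolding W_def by (simp add: field_simps)
    moreover have "(1 / M) ^ (m - 1) * ln (1 / r) ^ (m - 1) \<le> real A ^ (m - 1)"
      using A(1) M \<open>M < ln (1 / r)\<close> by (simp flip: power_mult_distrib) (intro power_mono; simp)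
    ultimately show ?thesis by (metis of_nat_le_iff of_nat_power order_trans)
  qed
  then show ?thesis
    unfolding good_set_def using M by (intro exI[of _ "(1 / M) ^ (m - 1)"] conjI exI[of _ "exp (- M)"]) auto
qed

end
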